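(* Let $D\subset\mathbb{R}^d$ be measurable, $k$ a measurable positive definite kernel on $D$ with all integrals below finite, and $r:D\to[0,\infty)$. Let $\bar{\mathbf{x}}_1,\dots,\bar{\mathbf{x}}_n\in D$ be distinct with replicate counts $a_1,\dots,a_n\ge1$, $N=\sum_ia_i$, with $r(\bar{\mathbf{x}}_i)>0$ for all $i$. Let $\mathbf{K}_n$ be the matrix with entries $k(\bar{\mathbf{x}}_i,\bar{\mathbf{x}}_j)+\delta_{ij}r(\bar{\mathbf{x}}_i)/a_i$ (invertible), $\mathbf{k}(\mathbf{x})=(k(\mathbf{x},\bar{\mathbf{x}}_i))_{i=1}^n$, $w(\mathbf{y},\mathbf{z})=\int_Dk(\mathbf{y},\mathbf{x})k(\mathbf{z},\mathbf{x})\,d\mathbf{x}$, $\mathbf{W}_n=(w(\bar{\mathbf{x}}_i,\bar{\mathbf{x}}_j))_{i,j}$, $\mathbf{w}(\tilde{\mathbf{x}})=(w(\tilde{\mathbf{x}},\bar{\mathbf{x}}_i))_{i=1}^n$, $E=\int_Dk(\mathbf{x},\mathbf{x})\,d\mathbf{x}$, $\check{\sigma}_n^2(\mathbf{x})=k(\mathbf{x},\mathbf{x})-\mathbf{k}(\mathbf{x})^\top\mathbf{K}_n^{-1}\mathbf{k}(\mathbf{x})$, $\sigma_n^2(\mathbf{x})=\check{\sigma}_n^2(\mathbf{x})+r(\mathbf{x})$, and assume $\sigma_n^2(\tilde{\mathbf{x}})>0$ for all $\tilde{\mathbf{x}}\in D$. Define: - for $k\in\{1,\dots,n\}$, $I_{N+1}(\bar{\mathbf{x}}_k)=E-\mathrm{tr}(\mathbf{K}'^{-1}\mathbf{W}_n)$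 where $\mathbf{K}'$ is $\mathbf{K}_n$ with $a_k$ replaced by $a_k+1$ (adding a replicate at $\bar{\mathbf{x}}_k$); - for $\tilde{\mathbf{x}}\in D$, $I_{N+1}(\tilde{\mathbf{x}})=E-\mathrm{tr}(\mathbf{K}_{n+1}^{-1}\mathbf{W}_{n+1})$ where $\mathbf{K}_{n+1}=\begin{bmatrix}\mathbf{K}_n&\mathbf{k}(\tilde{\mathbf{x}})\\\mathbf{k}(\tilde{\mathbf{x}})^\top&k(\tilde{\mathbf{x}},\tilde{\mathbf{x}})+r(\tilde{\mathbf{x}})\end{bmatrix}$ and $\mathbf{W}_{n+1}=\begin{bmatrix}\mathbf{W}_n&\mathbf{w}(\tilde{\mathbf{x}})\\\mathbf{w}(\tilde{\mathbf{x}})^\top&w(\tilde{\mathbf{x}},\tilde{\mathbf{x}})\end{bmatrix}$ (adding $\tilde{\mathbf{x}}$ as a new design site with a single observation). Let $k^*\in\arg\min_{1\le k\le n}I_{N+1}(\bar{\mathbf{x}}_k)$ and $$\mathbf{B}_{k^*}=\frac{(\mathbf{K}_n^{-1})_{\cdot,k^*}(\mathbf{K}_n^{-1})_{k^*,\cdot}}{a_{k^*}(a_{k^*}+1)/r(\bar{\mathbf{x}}_{k^*})-(\mathbf{K}_n^{-1})_{k^*,k^*}},$$ and suppose $\mathrm{tr}(\mathbf{B}_{k^*}\mathbf{W}_n)>0$ (and the denominator of $\mathbf{B}_{k^*}$ is nonzero). If $$r(\tilde{\mathbf{x}})\ \ge\ \frac{\mathbf{k}(\tilde{\mathbf{x}})^\top\mathbf{K}_n^{-1}\mathbf{W}_n\mathbf{K}_n^{-1}\mathbf{k}(\tilde{\mathbf{x}})-2\mathbf{w}(\tilde{\mathbf{x}})^\top\mathbf{K}_n^{-1}\mathbf{k}(\tilde{\mathbf{x}})+w(\tilde{\mathbf{x}},\tilde{\mathbf{x}})}{\mathrm{tr}(\mathbf{B}_{k^*}\mathbf{W}_n)}-\check{\sigma}_n^2(\tilde{\mathbf{x}})\qquad\text{for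 all }\tilde{\mathbf{x}}\in D,$$ then replicating is optimal, i.e. $I_{N+1}(\bar{\mathbf{x}}_{k^*})\le I_{N+1}(\tilde{\mathbf{x}})$ for all $\tilde{\mathbf{x}}\in D$.
   Context: Setting: sequential design for Gaussian process regression with zero-mean GP prior with kernel $k$, independent Gaussian noise of variance $r(\mathbf{x})$, and $a_i$ replicates at unique site $\bar{\mathbf{x}}_i$. The criterion is the integrated mean-squared prediction error (integral over $D$ of the de-noised posterior variance $\check{\sigma}^2$) of the design after one more observation, either a replicate at an existing site or a new site. $\delta_{ij}$ is the Kronecker delta; $(\cdot)_{\cdot,k}$ and $(\cdot)_{k,\cdot}$ denote the $k$-th column and row. *)

theory Defs
  imports "HOL-Analysis.Analysis" "Jordan_Normal_Form.Matrix"
begin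

(* Positive (semi)definite kernel on D: symmetric, and every Gram matrix of points of D
   is positive semidefinite (the usual meaning of "positive definite kernel"). *)
definition pd_kernel :: "'a set \<Rightarrow> ('a \<Rightarrow> 'a \<Rightarrow> real) \<Rightarrow> bool" where
  "pd_kernel D k \<longleftrightarrow> (\<forall>x\<in>D. \<forall>y\<in>D. k x y = k y x) \<and>
     (\<forall>(m::nat) (xs::nat \<Rightarrow> 'a) (c::nat \<Rightarrow> real). (\<forall>i<m. xs i \<in> D) \<longrightarrow>
        0 \<le> (\<Sum>i<m. \<Sum>j<m. c i * c j * k (xs i) (xs j)))"

definition mtrace :: "real mat \<Rightarrow> real" where
  "mtrace M = (\<Sum>i<dim_row M. M $$ (i, i))"

definition minv :: "real mat \<Rightarrow> real mat" where
  "minv A = (SOME B. B \<in> carrier_mat (dim_row A) (dim_row A) \<and>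
                     A * B = 1\<^sub>m (dim_row A) \<and> B * A = 1\<^sub>m (dim_row A))"

definition Kmat :: "('a \<Rightarrow> 'a \<Rightarrow> real) \<Rightarrow> ('a \<Rightarrow> real) \<Rightarrow> nat \<Rightarrow> (nat \<Rightarrow> 'a) \<Rightarrow> (nat \<Rightarrow> nat) \<Rightarrow> real mat" where
  "Kmat k r n xb a = mat n n (\<lambda>(i, j). k (xb i) (xb j) + (if i = j then r (xb i) / real (a i) else 0))"

definition kvec :: "('a \<Rightarrow> 'a \<Rightarrow> real) \<Rightarrow> nat \<Rightarrow> (nat \<Rightarrow> 'a) \<Rightarrow> 'a \<Rightarrow> real vec" where
  "kvec k n xb x = vec n (\<lambda>i. k x (xb i))"

definition wfun :: "('a::euclidean_space) set \<Rightarrow> ('a \<Rightarrow> 'a \<Rightarrow> real) \<Rightarrow> 'a \<Rightarrow> 'a \<Rightarrow> real" where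
  "wfun D k y z = (LINT x:D|lebesgue. k y x * k z x)"

definition Wmat :: "('a::euclidean_space) set \<Rightarrow> ('a \<Rightarrow> 'a \<Rightarrow> real) \<Rightarrow> nat \<Rightarrow> (nat \<Rightarrow> 'a) \<Rightarrow> real mat" where
  "Wmat D k n xb = mat n n (\<lambda>(i, j). wfun D k (xb i) (xb j))"

definition wvec :: "('a::euclidean_space) set \<Rightarrow> ('a \<Rightarrow> 'a \<Rightarrow> real) \<Rightarrow> nat \<Rightarrow> (nat \<Rightarrow> 'a) \<Rightarrow> 'a \<Rightarrow> real vec" where
  "wvec D k n xb x = vec n (\<lambda>i. wfun D k x (xb i))"

definition Eint :: "('a::euclidean_space) set \<Rightarrow> ('a \<Rightarrow> 'a \<Rightarrow> real) \<Rightarrow> real" where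
  "Eint D k = (LINT x:D|lebesgue. k x x)"

definition sigma_check :: "('a \<Rightarrow> 'a \<Rightarrow> real) \<Rightarrow> ('a \<Rightarrow> real) \<Rightarrow> nat \<Rightarrow> (nat \<Rightarrow> 'a) \<Rightarrow> (nat \<Rightarrow> nat) \<Rightarrow> 'a \<Rightarrow> real" where
  "sigma_check k r n xb a x = k x x - kvec k n xb x \<bullet> (minv (Kmat k r n xb a) *\<^sub>v kvec k n xb x)"

definition I_rep :: "('a::euclidean_space) set \<Rightarrow> ('a \<Rightarrow> 'a \<Rightarrow> real) \<Rightarrow> ('a \<Rightarrow> real) \<Rightarrow> nat \<Rightarrow> (nat \<Rightarrow> 'a) \<Rightarrow> (nat \<Rightarrow> nat) \<Rightarrow> nat \<Rightarrow> real" where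
  "I_rep D k r n xb a j = Eint D k - mtrace (minv (Kmat k r n xb (a(j := a j + 1))) * Wmat D k n xb)"

definition K_new :: "('a \<Rightarrow> 'a \<Rightarrow> real) \<Rightarrow> ('a \<Rightarrow> real) \<Rightarrow> nat \<Rightarrow> (nat \<Rightarrow> 'a) \<Rightarrow> (nat \<Rightarrow> nat) \<Rightarrow> 'a \<Rightarrow> real mat" where
  "K_new k r n xb a x = four_block_mat (Kmat k r n xb a) (mat_of_cols n [kvec k n xb x])
      (mat_of_rows n [kvec k n xb x]) (mat 1 1 (\<lambda>_. k x x + r x))"

definition W_new :: "('a::euclidean_space) set \<Rightarrow> ('a \<Rightarrow> 'a \<Rightarrow> real) \<Rightarrow> nat \<Rightarrow> (nat \<Rightarrow> 'a) \<Rightarrow> 'a \<Rightarrow> real mat" where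
  "W_new D k n xb x = four_block_mat (Wmat D k n xb) (mat_of_cols n [wvec D k n xb x])
      (mat_of_rows n [wvec D k n xb x]) (mat 1 1 (\<lambda>_. wfun D k x x))"

definition I_new :: "('a::euclidean_space) set \<Rightarrow> ('a \<Rightarrow> 'a \<Rightarrow> real) \<Rightarrow> ('a \<Rightarrow> real) \<Rightarrow> nat \<Rightarrow> (nat \<Rightarrow> 'a) \<Rightarrow> (nat \<Rightarrow> nat) \<Rightarrow> 'a \<Rightarrow> real" where
  "I_new D k r n xb a x = Eint D k - mtrace (minv (K_new k r n xb a x) * W_new D k n xb x)"

definition B_den :: "('a \<Rightarrow> 'a \<Rightarrow> real) \<Rightarrow> ('a \<Rightarrow> real) \<Rightarrow> nat \<Rightarrow> (nat \<Rightarrow> 'a) \<Rightarrow> (nat \<Rightarrow> nat) \<Rightarrow> nat \<Rightarrow> real" where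
  "B_den k r n xb a j = real (a j) * real (a j + 1) / r (xb j) - minv (Kmat k r n xb a) $$ (j, j)"

definition Bmat :: "('a \<Rightarrow> 'a \<Rightarrow> real) \<Rightarrow> ('a \<Rightarrow> real) \<Rightarrow> nat \<Rightarrow> (nat \<Rightarrow> 'a) \<Rightarrow> (nat \<Rightarrow> nat) \<Rightarrow> nat \<Rightarrow> real mat" where
  "Bmat k r n xb a j = (1 / B_den k r n xb a j) \<cdot>\<^sub>m
     mat n n (\<lambda>(i, l). minv (Kmat k r n xb a) $$ (i, j) * minv (Kmat k r n xb a) $$ (j, l))"

end

theory Submission
  imports Defs "Jordan_Normal_Form.Determinant"
begin

(* Both criteria reduce to E - tr(K_n^-1 W_n) minus a correction.  A replicate at the site k*
   only lowers the nugget r/a_k* on the diagonal, so by Sherman--Morrison the inverse gains the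
   rank-one term B_k*, and the correction is tr(B_k* W_n).  A new site x borders K_n by k(x); its
   inverse via the Schur complement, which is the predictive variance sigma_n^2(x), makes the
   correction Q(x) / sigma_n^2(x), with Q(x) the numerator in the hypothesis on r.  That hypothesis
   says precisely Q(x) / sigma_n^2(x) <= tr(B_k* W_n). *)

lemma index_mult_mat_sum:
  assumes "A \<in> carrier_mat nr m" "B \<in> carrier_mat m nc" "i < nr" "j < nc"
  shows "(A * B) $$ (i, j) = (\<Sum>l<m. A $$ (i, l) * B $$ (l, j))"
  using assms by (auto simp: scalar_prod_def lessThan_atLeast0 intro!: sum.cong)

lemma mtrace_mult:
  assumes "A \<in> carrier_mat n m" "B \<in> carrier_mat m n"
  shows "mtrace (A * B) = (\<Sum>i<n. \<Sum>l<m. A $$ (i, l) * B $$ (l, i))"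
  using assms unfolding mtrace_def
  by (auto intro!: sum.cong simp del: index_mult_mat(1) simp add: index_mult_mat_sum[OF assms])

lemma mtrace_add:
  assumes "A \<in> carrier_mat n n" "B \<in> carrier_mat n n"
  shows "mtrace (A + B) = mtrace A + mtrace B"
  using assms unfolding mtrace_def by (simp add: sum.distrib)

lemma minv_eqI:
  fixes A B :: "real mat"
  assumes A: "A \<in> carrier_mat n n" and B: "B \<in> carrier_mat n n" and AB: "A * B = 1\<^sub>m n"
  shows "minv A = B"
proof -
  have "B * A = 1\<^sub>m n" by (rule mat_mult_left_right_inverse[OF A B AB])
  with A B AB have "\<exists>C. C \<in> carrier_mat (dim_row A) (dim_row A) \<and>
      A * C = 1\<^sub>m (dim_row A) \<and> C * A = 1\<^sub>m (dim_row A)" by auto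
  from someI_ex[OF this] A have Ai: "minv A \<in> carrier_mat n n" "minv A * A = 1\<^sub>m n"
    unfolding minv_def by auto
  have "minv A = minv A * (A * B)" using Ai(1) by (simp add: AB)
  also have "\<dots> = (minv A * A) * B" using Ai(1) A B by simp
  also have "\<dots> = B" using Ai(2) B by simp
  finally show ?thesis .
qed

lemma minv_invertible:
  fixes A :: "real mat"
  assumes A: "A \<in> carrier_mat n n" and inv: "invertible_mat A"
  shows "minv A \<in> carrier_mat n n" "A * minv A = 1\<^sub>m n"
proof -
  obtain B where AB: "A * B = 1\<^sub>m (dim_row A)" and BA: "B * A = 1\<^sub>m (dim_row B)"
    using inv unfolding invertible_mat_def inverts_mat_def by blast
  have B: "B \<in> carrier_mat n n"
    using arg_cong[OF AB, of dim_col] arg_cong[OF BA, of dim_col] A by auto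
  have "minv A = B" using minv_eqI[OF A B] AB A by simp
  then show "minv A \<in> carrier_mat n n" "A * minv A = 1\<^sub>m n" using AB A B by auto
qed

lemma minv_symmetric:
  fixes A :: "real mat"
  assumes A: "A \<in> carrier_mat n n" and inv: "invertible_mat A" and sym: "transpose_mat A = A"
  shows "transpose_mat (minv A) = minv A"
proof -
  note Ai = minv_invertible[OF A inv]
  have "minv A * A = 1\<^sub>m n" by (rule mat_mult_left_right_inverse[OF A Ai])
  then have "A * transpose_mat (minv A) = 1\<^sub>m n"
    using transpose_mult[OF Ai(1) A] sym by simp
  then have "minv A = transpose_mat (minv A)" using A Ai(1) by (intro minv_eqI) auto
  then show ?thesis by simp
qed

text \<open>Sherman--Morrison for lowering the diagonal entry \<open>p\<close> by \<open>c\<close>; the hypothesis on \<open>t\<close>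
  says \<open>t = c / (1 - c Ki\<^sub>p\<^sub>p)\<close> without dividing.\<close>

lemma diagonal_decrement_inverse:
  fixes K Ki :: "real mat" and c t :: real
  assumes K: "K \<in> carrier_mat n n" and Ki: "Ki \<in> carrier_mat n n" and KKi: "K * Ki = 1\<^sub>m n"
    and p: "p < n" and t: "t - c - c * t * Ki $$ (p, p) = 0"
  shows "mat n n (\<lambda>(i, j). K $$ (i, j) - (if i = p \<and> j = p then c else 0)) *
         (Ki + t \<cdot>\<^sub>m mat n n (\<lambda>(i, j). Ki $$ (i, p) * Ki $$ (p, j))) = 1\<^sub>m n"
    (is "?K' * ?M = _")
proof (rule eq_matI)
  fix i j assume "i < dim_row (1\<^sub>m n :: real mat)" "j < dim_col (1\<^sub>m n :: real mat)"
  then have i: "i < n" and j: "j < n" by auto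
  have delta: "(\<Sum>l<n. K $$ (i, l) * Ki $$ (l, m)) = (if i = m then 1 else 0)" if "m < n" for m
    using index_mult_mat_sum[OF K Ki i that] KKi i that by simp
  define X where "X l = Ki $$ (l, j) + t * (Ki $$ (l, p) * Ki $$ (p, j))" for l
  have "(?K' * ?M) $$ (i, j) = (\<Sum>l<n. (K $$ (i, l) - (if i = p \<and> l = p then c else 0)) * X l)"
    using i j Ki by (subst index_mult_mat_sum[of _ n n]) (auto intro!: sum.cong simp: X_def)
  also have "\<dots> = (\<Sum>l<n. K $$ (i, l) * Ki $$ (l, j) + t * Ki $$ (p, j) * (K $$ (i, l) * Ki $$ (l, p))
      - (if l = p then (if i = p then c * X p else 0) else 0))"
    by (rule sum.cong) (auto simp: X_def algebra_simps)
  also have "\<dots> = (\<Sum>l<n. K $$ (i, l) * Ki $$ (l, j))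
      + t * Ki $$ (p, j) * (\<Sum>l<n. K $$ (i, l) * Ki $$ (l, p)) - (if i = p then c * X p else 0)"
    using p by (simp add: sum.distrib sum_subtractf sum_distrib_left)
  also have "\<dots> = (if i = j then 1 else 0) + (if i = p then Ki $$ (p, j) * (t - c - c * t * Ki $$ (p, p)) else 0)"
    by (simp add: delta j p X_def algebra_simps)
  finally show "(?K' * ?M) $$ (i, j) = 1\<^sub>m n $$ (i, j)" using t i j by simp
qed (use Ki in auto)

text \<open>The inverse of \<open>[K kv; kv\<^sup>T d]\<close> by the Schur complement \<open>s = d - kv\<^sup>T K\<^sup>-\<^sup>1 kv\<close>,
  with \<open>Ki = K\<^sup>-\<^sup>1\<close> and \<open>v = K\<^sup>-\<^sup>1 kv\<close>.\<close>

definition bordered_inverse :: "real mat \<Rightarrow> real vec \<Rightarrow> real \<Rightarrow> real mat" where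
  "bordered_inverse Ki v s = mat (Suc (dim_row Ki)) (Suc (dim_row Ki)) (\<lambda>(i, j).
     if i < dim_row Ki then if j < dim_row Ki then Ki $$ (i, j) + v $ i * v $ j / s else - v $ i / s
     else if j < dim_row Ki then - v $ j / s else 1 / s)"

lemma bordered_mat_eq:
  assumes "K \<in> carrier_mat n n" "kv \<in> carrier_vec n"
  shows "four_block_mat K (mat_of_cols n [kv]) (mat_of_rows n [kv]) (mat 1 1 (\<lambda>_. d)) =
    mat (Suc n) (Suc n) (\<lambda>(i, j). if i < n then if j < n then K $$ (i, j) else kv $ i
      else if j < n then kv $ j else d)"
  using assms by (intro eq_matI) (auto simp: mat_of_cols_index mat_of_rows_index)

lemma index_mult_mat_Suc:
  assumes "i < Suc n" "j < Suc n"
  shows "(mat (Suc n) (Suc n) f * mat (Suc n) (Suc n) g) $$ (i, j)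
    = (\<Sum>l<n. f (i, l) * g (l, j)) + f (i, n) * g (n, j)"
  using assms by (subst index_mult_mat_sum[of _ "Suc n" "Suc n"]) auto

lemma bordered_mat_mult_bordered_inverse:
  fixes K Ki :: "real mat" and kv :: "real vec" and d s :: real
  assumes K: "K \<in> carrier_mat n n" and Ki: "Ki \<in> carrier_mat n n" and KKi: "K * Ki = 1\<^sub>m n"
    and Ki_sym: "transpose_mat Ki = Ki" and kv: "kv \<in> carrier_vec n"
    and s: "s = d - kv \<bullet> (Ki *\<^sub>v kv)" and s0: "s \<noteq> 0"
  shows "four_block_mat K (mat_of_cols n [kv]) (mat_of_rows n [kv]) (mat 1 1 (\<lambda>_. d)) *
         bordered_inverse Ki (Ki *\<^sub>v kv) s = 1\<^sub>m (Suc n)"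
proof -
  define v where "v = Ki *\<^sub>v kv"
  have "K *\<^sub>v v = kv"
    using assoc_mult_mat_vec[OF K Ki kv, symmetric] KKi kv by (simp add: v_def)
  then have Kv: "(\<Sum>l<n. K $$ (i, l) * v $ l) = kv $ i" if "i < n" for i
    using that K Ki by (auto simp: v_def scalar_prod_def lessThan_atLeast0 dest!: arg_cong[of _ _ "\<lambda>u. u $ i"])
  have kvKi: "(\<Sum>l<n. kv $ l * Ki $$ (l, j)) = v $ j" if "j < n" for j
  proof -
    have "Ki $$ (l, j) = Ki $$ (j, l)" if "l < n" for l
      using arg_cong[OF Ki_sym, of "\<lambda>M. M $$ (j, l)"] \<open>j < n\<close> that Ki by simp
    then show ?thesis
      using that Ki kv by (auto simp: v_def scalar_prod_def lessThan_atLeast0 mult.commute intro!: sum.cong)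
  qed
  have sv: "(\<Sum>l<n. kv $ l * v $ l) = d - s"
  proof -
    have "dim_vec v = n" using Ki by (simp add: v_def)
    then show ?thesis using s by (simp add: v_def[symmetric] scalar_prod_def lessThan_atLeast0)
  qed
  define f where "f = (\<lambda>(i, j). if i < n then if j < n then K $$ (i, j) else kv $ i
      else if j < n then kv $ j else d)"
  define g where "g = (\<lambda>(i, j). if i < n then if j < n then Ki $$ (i, j) + v $ i * v $ j / s else - v $ i / s
      else if j < n then - v $ j / s else 1 / s)"
  let ?P = "four_block_mat K (mat_of_cols n [kv]) (mat_of_rows n [kv]) (mat 1 1 (\<lambda>_. d)) *
    bordered_inverse Ki v s"
  have P: "?P = mat (Suc n) (Suc n) f * mat (Suc n) (Suc n) g"
    unfolding bordered_mat_eq[OF K kv] bordered_inverse_def carrier_matD(1)[OF Ki] f_def g_def ..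
  show ?thesis
    unfolding v_def[symmetric]
  proof (rule eq_matI)
    fix i j assume "i < dim_row (1\<^sub>m (Suc n) :: real mat)" "j < dim_col (1\<^sub>m (Suc n) :: real mat)"
    then have i: "i < Suc n" and j: "j < Suc n" by auto
    have Pij: "?P $$ (i, j) = (\<Sum>l<n. f (i, l) * g (l, j)) + f (i, n) * g (n, j)"
      unfolding P using i j by (rule index_mult_mat_Suc)
    consider "i < n" "j < n" | "i < n" "j = n" | "i = n" "j < n" | "i = n" "j = n"
      using i j by linarith
    then show "?P $$ (i, j) = 1\<^sub>m (Suc n) $$ (i, j)"
    proof cases
      case 1
      have "?P $$ (i, j) = (\<Sum>l<n. K $$ (i, l) * Ki $$ (l, j) + K $$ (i, l) * v $ l * (v $ j / s))
          - kv $ i * (v $ j / s)"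
        unfolding Pij using 1 by (auto simp: f_def g_def algebra_simps intro!: sum.cong)
      also have "\<dots> = (\<Sum>l<n. K $$ (i, l) * Ki $$ (l, j))
          + (\<Sum>l<n. K $$ (i, l) * v $ l) * (v $ j / s) - kv $ i * (v $ j / s)"
        by (simp only: sum.distrib sum_distrib_right)
      also have "\<dots> = (if i = j then 1 else 0)"
        using 1 index_mult_mat_sum[OF K Ki, of i j] KKi by (simp add: Kv)
      finally show ?thesis using 1 by simp
    next
      case 2
      have "?P $$ (i, j) = (\<Sum>l<n. K $$ (i, l) * v $ l) * (- 1 / s) + kv $ i * (1 / s)"
        unfolding Pij using 2 by (simp add: f_def g_def sum_distrib_right sum_negf sum_divide_distrib)
      then show ?thesis using 2 by (simp add: Kv)
    next
      case 3
      have "?P $$ (i, j) = (\<Sum>l<n. kv $ l * Ki $$ (l, j) + kv $ l * v $ l * (v $ j / s))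
          + d * (- v $ j / s)"
        unfolding Pij using 3 by (auto simp: f_def g_def algebra_simps intro!: sum.cong)
      also have "\<dots> = (\<Sum>l<n. kv $ l * Ki $$ (l, j)) + (\<Sum>l<n. kv $ l * v $ l) * (v $ j / s)
          + d * (- v $ j / s)"
        by (simp only: sum.distrib sum_distrib_right)
      also have "\<dots> = 0" using 3 s0 by (simp add: kvKi sv field_simps)
      finally show ?thesis using 3 by simp
    next
      case 4
      have "?P $$ (i, j) = (\<Sum>l<n. kv $ l * v $ l) * (- 1 / s) + d * (1 / s)"
        unfolding Pij using 4 by (simp add: f_def g_def sum_distrib_right sum_negf sum_divide_distrib)
      also have "\<dots> = 1" using s0 by (simp add: sv field_simps)
      finally show ?thesis using 4 by simp
    qed
  qed (use K Ki in \<open>auto simp: bordered_inverse_def\<close>)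
qed

lemma mtrace_bordered_inverse_mult:
  fixes Ki W :: "real mat" and v wv :: "real vec" and ww s :: real
  assumes Ki: "Ki \<in> carrier_mat n n" and W: "W \<in> carrier_mat n n"
    and v: "v \<in> carrier_vec n" and wv: "wv \<in> carrier_vec n"
  shows "mtrace (bordered_inverse Ki v s *
      four_block_mat W (mat_of_cols n [wv]) (mat_of_rows n [wv]) (mat 1 1 (\<lambda>_. ww)))
    = mtrace (Ki * W) + (v \<bullet> (W *\<^sub>v v) - 2 * (wv \<bullet> v) + ww) / s"
proof -
  define g where "g = (\<lambda>(i, j). if i < n then if j < n then Ki $$ (i, j) + v $ i * v $ j / s else - v $ i / s
      else if j < n then - v $ j / s else 1 / s)"
  define h where "h = (\<lambda>(i, j). if i < n then if j < n then W $$ (i, j) else wv $ i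
      else if j < n then wv $ j else ww)"
  have vWv: "v \<bullet> (W *\<^sub>v v) = (\<Sum>i<n. \<Sum>l<n. v $ i * v $ l * W $$ (l, i))"
  proof -
    have "v \<bullet> (W *\<^sub>v v) = (\<Sum>l<n. \<Sum>i<n. v $ i * v $ l * W $$ (l, i))"
      using W v by (simp add: scalar_prod_def lessThan_atLeast0 sum_distrib_left algebra_simps)
    also have "\<dots> = (\<Sum>i<n. \<Sum>l<n. v $ i * v $ l * W $$ (l, i))"
      by (rule sum.swap)
    finally show ?thesis .
  qed
  have wvv: "wv \<bullet> v = (\<Sum>i<n. wv $ i * v $ i)"
    using v by (simp add: scalar_prod_def lessThan_atLeast0)
  have "mtrace (bordered_inverse Ki v s *
      four_block_mat W (mat_of_cols n [wv]) (mat_of_rows n [wv]) (mat 1 1 (\<lambda>_. ww)))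
    = mtrace (mat (Suc n) (Suc n) g * mat (Suc n) (Suc n) h)"
    unfolding bordered_mat_eq[OF W wv] bordered_inverse_def carrier_matD(1)[OF Ki] g_def h_def ..
  also have "\<dots> = (\<Sum>i<Suc n. \<Sum>l<Suc n. g (i, l) * h (l, i))"
    by (subst mtrace_mult[of _ "Suc n" "Suc n"]) (auto intro!: sum.cong)
  also have "\<dots> = (\<Sum>i<n. (\<Sum>l<n. g (i, l) * h (l, i)) + g (i, n) * h (n, i))
      + ((\<Sum>l<n. g (n, l) * h (l, n)) + g (n, n) * h (n, n))"
    by (simp only: sum.lessThan_Suc)
  also have "\<dots> = (\<Sum>i<n. (\<Sum>l<n. Ki $$ (i, l) * W $$ (l, i) + v $ i * v $ l * W $$ (l, i) / s)
      - wv $ i * v $ i / s) + ((\<Sum>l<n. - (wv $ l * v $ l / s)) + ww / s)"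
    by (auto intro!: sum.cong simp: g_def h_def algebra_simps)
  also have "\<dots> = mtrace (Ki * W) + (\<Sum>i<n. \<Sum>l<n. v $ i * v $ l * W $$ (l, i)) / s
      - 2 * ((\<Sum>i<n. wv $ i * v $ i) / s) + ww / s"
    by (simp add: mtrace_mult[OF Ki W] sum.distrib sum_subtractf sum_divide_distrib sum_negf)
  finally show ?thesis by (simp add: vWv wvv add_divide_distrib diff_divide_distrib)
qed

lemma Kmat_carrier: "Kmat k r n xb a \<in> carrier_mat n n"
  by (simp add: Kmat_def)

lemma Wmat_carrier: "Wmat D k n xb \<in> carrier_mat n n"
  by (simp add: Wmat_def)

lemma Kmat_symmetric:
  assumes "\<forall>i<n. \<forall>j<n. k (xb i) (xb j) = k (xb j) (xb i)"
  shows "transpose_mat (Kmat k r n xb a) = Kmat k r n xb a"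
  using assms by (intro eq_matI) (auto simp: Kmat_def)

text \<open>One more replicate at site \<open>p\<close> lowers the nugget \<open>r/a\<^sub>p\<close> by \<open>c = r/(a\<^sub>p(a\<^sub>p+1))\<close>,
  and \<open>1/c - (K\<^sub>n\<^sup>-\<^sup>1)\<^sub>p\<^sub>p\<close> is exactly \<open>B_den\<close>, so Sherman--Morrison gives \<open>K'\<^sup>-\<^sup>1 = K\<^sub>n\<^sup>-\<^sup>1 + B\<^sub>p\<close>.\<close>

lemma I_rep_eq:
  assumes inv: "invertible_mat (Kmat k r n xb a)" and p: "p < n" and ap: "1 \<le> a p"
    and rp: "0 < r (xb p)" and den: "B_den k r n xb a p \<noteq> 0"
  shows "I_rep D k r n xb a p = Eint D k - mtrace (minv (Kmat k r n xb a) * Wmat D k n xb)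
           - mtrace (Bmat k r n xb a p * Wmat D k n xb)"
proof -
  define K where "K = Kmat k r n xb a"
  define Ki where "Ki = minv K"
  define W where "W = Wmat D k n xb"
  note Kc = Kmat_carrier[of k r n xb a, folded K_def]
  note Ki = minv_invertible[OF Kc inv[folded K_def], folded Ki_def]
  note Wc = Wmat_carrier[of D k n xb, folded W_def]
  define c where "c = r (xb p) / real (a p) - r (xb p) / real (a p + 1)"
  define t where "t = 1 / B_den k r n xb a p"
  have c_inv: "1 / c = real (a p) * real (a p + 1) / r (xb p)"
    using ap rp by (simp add: c_def field_simps)
  then have c0: "c \<noteq> 0" using ap rp by auto
  have "Ki $$ (p, p) = 1 / c - B_den k r n xb a p"
    by (simp add: B_den_def c_inv Ki_def K_def)
  then have cq: "c * Ki $$ (p, p) + c * B_den k r n xb a p = 1"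
    using c0 by (simp add: right_diff_distrib)
  have "t - c - c * t * Ki $$ (p, p)
      = t * (1 - (c * Ki $$ (p, p) + c * B_den k r n xb a p)) + c * (t * B_den k r n xb a p - 1)"
    by (simp add: algebra_simps)
  then have "t - c - c * t * Ki $$ (p, p) = c * (t * B_den k r n xb a p - 1)"
    by (simp only: cq) simp
  then have t: "t - c - c * t * Ki $$ (p, p) = 0"
    using den by (simp add: t_def)
  have K': "Kmat k r n xb (a(p := a p + 1)) = mat n n (\<lambda>(i, j). K $$ (i, j) - (if i = p \<and> j = p then c else 0))"
    by (intro eq_matI) (auto simp: K_def Kmat_def c_def)
  have B: "Bmat k r n xb a p = t \<cdot>\<^sub>m mat n n (\<lambda>(i, j). Ki $$ (i, p) * Ki $$ (p, j))"
    by (simp add: Bmat_def t_def Ki_def K_def)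
  have Bc: "Bmat k r n xb a p \<in> carrier_mat n n" by (simp add: B)
  have "minv (Kmat k r n xb (a(p := a p + 1))) = Ki + Bmat k r n xb a p"
    unfolding K' B
  proof (rule minv_eqI)
    show "mat n n (\<lambda>(i, j). K $$ (i, j) - (if i = p \<and> j = p then c else 0)) *
        (Ki + t \<cdot>\<^sub>m mat n n (\<lambda>(i, j). Ki $$ (i, p) * Ki $$ (p, j))) = 1\<^sub>m n"
      by (rule diagonal_decrement_inverse[OF Kc Ki(1) Ki(2) p t])
  qed (use Ki(1) in auto)
  then show ?thesis
    using Ki(1) Bc Wc
    by (simp add: I_rep_def add_mult_distrib_mat[of _ n n] mtrace_add[of _ n] W_def Ki_def K_def)
qed

lemma I_new_eq:
  assumes inv: "invertible_mat (Kmat k r n xb a)"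
    and sym: "transpose_mat (Kmat k r n xb a) = Kmat k r n xb a"
    and s0: "sigma_check k r n xb a x + r x \<noteq> 0"
  shows "I_new D k r n xb a x = Eint D k - mtrace (minv (Kmat k r n xb a) * Wmat D k n xb)
    - (kvec k n xb x \<bullet> (minv (Kmat k r n xb a) * Wmat D k n xb * minv (Kmat k r n xb a) *\<^sub>v kvec k n xb x)
       - 2 * (wvec D k n xb x \<bullet> (minv (Kmat k r n xb a) *\<^sub>v kvec k n xb x))
       + wfun D k x x) / (sigma_check k r n xb a x + r x)"
proof -
  define K where "K = Kmat k r n xb a"
  define Ki where "Ki = minv K"
  define W where "W = Wmat D k n xb"
  define kv where "kv = kvec k n xb x"
  define wv where "wv = wvec D k n xb x"
  define s where "s = sigma_check k r n xb a x + r x"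
  note Kc = Kmat_carrier[of k r n xb a, folded K_def]
  note Ki = minv_invertible[OF Kc inv[folded K_def], folded Ki_def]
  note Wc = Wmat_carrier[of D k n xb, folded W_def]
  have Ki_sym: "transpose_mat Ki = Ki"
    unfolding Ki_def by (rule minv_symmetric[OF Kc inv[folded K_def] sym[folded K_def]])
  have kv: "kv \<in> carrier_vec n" and wv: "wv \<in> carrier_vec n"
    by (simp_all add: kv_def kvec_def wv_def wvec_def)
  have Kiv: "Ki *\<^sub>v kv \<in> carrier_vec n" using Ki(1) kv by simp
  have s: "s = (k x x + r x) - kv \<bullet> (Ki *\<^sub>v kv)"
    by (simp add: s_def sigma_check_def kv_def Ki_def K_def)
  have K_new_inv: "minv (K_new k r n xb a x) = bordered_inverse Ki (Ki *\<^sub>v kv) s"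
    unfolding K_new_def kv_def[symmetric] K_def[symmetric]
  proof (rule minv_eqI)
    show "four_block_mat K (mat_of_cols n [kv]) (mat_of_rows n [kv]) (mat 1 1 (\<lambda>_. k x x + r x)) *
        bordered_inverse Ki (Ki *\<^sub>v kv) s = 1\<^sub>m (Suc n)"
      using bordered_mat_mult_bordered_inverse[OF Kc Ki Ki_sym kv s] s0 by (simp add: s_def)
  qed (use Kc Ki(1) kv in \<open>auto simp: bordered_inverse_def\<close>)
  have quad: "kv \<bullet> (Ki * W * Ki *\<^sub>v kv) = (Ki *\<^sub>v kv) \<bullet> (W *\<^sub>v (Ki *\<^sub>v kv))"
  proof -
    have "Ki * W * Ki *\<^sub>v kv = Ki *\<^sub>v (W *\<^sub>v (Ki *\<^sub>v kv))"
      using Ki(1) Wc kv by (simp add: assoc_mult_mat_vec[of _ n n _ n])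
    then show ?thesis
      using transpose_vec_mult_scalar[OF Ki(1) _ kv, of "W *\<^sub>v (Ki *\<^sub>v kv)"] Ki_sym Wc Kiv by simp
  qed
  show ?thesis
    unfolding I_new_def W_new_def wv_def[symmetric] W_def[symmetric] kv_def[symmetric] K_def[symmetric]
      Ki_def[symmetric] s_def[symmetric] K_new_inv mtrace_bordered_inverse_mult[OF Ki(1) Wc Kiv wv] quad
    by simp
qed

theorem proposition1:
  fixes D :: "(real^'d) set" and k :: "real^'d \<Rightarrow> real^'d \<Rightarrow> real"
    and r :: "real^'d \<Rightarrow> real"
    and n :: nat and xb :: "nat \<Rightarrow> real^'d" and a :: "nat \<Rightarrow> nat" and kstar :: nat
  assumes D_meas: "D \<in> sets lebesgue"
    and k_meas: "(\<lambda>p. k (fst p) (snd p)) \<in> borel_measurable (restrict_space (lebesgue \<Otimes>\<^sub>M lebesgue) (D \<times> D))"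
    and k_pd: "pd_kernel D k"
    and w_int: "\<forall>y\<in>D. \<forall>z\<in>D. set_integrable lebesgue D (\<lambda>x. k y x * k z x)"
    and E_int: "set_integrable lebesgue D (\<lambda>x. k x x)"
    and r_nonneg: "\<forall>x\<in>D. 0 \<le> r x"
    and xb_D: "\<forall>i<n. xb i \<in> D"
    and xb_distinct: "inj_on xb {..<n}"
    and a_pos: "\<forall>i<n. 1 \<le> a i"
    and r_sites: "\<forall>i<n. 0 < r (xb i)"
    and K_inv: "invertible_mat (Kmat k r n xb a)"
    and sigma_pos: "\<forall>x\<in>D. 0 < sigma_check k r n xb a x + r x"
    and kstar_lt: "kstar < n"
    and kstar_argmin: "\<forall>j<n. I_rep D k r n xb a kstar \<le> I_rep D k r n xb a j"
    and den_nz: "B_den k r n xb a kstar \<noteq> 0"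
    and trBW_pos: "0 < mtrace (Bmat k r n xb a kstar * Wmat D k n xb)"
    and r_cond: "\<forall>x\<in>D. r x \<ge>
        (kvec k n xb x \<bullet> (minv (Kmat k r n xb a) * Wmat D k n xb * minv (Kmat k r n xb a) *\<^sub>v kvec k n xb x)
         - 2 * (wvec D k n xb x \<bullet> (minv (Kmat k r n xb a) *\<^sub>v kvec k n xb x))
         + wfun D k x x) / mtrace (Bmat k r n xb a kstar * Wmat D k n xb)
        - sigma_check k r n xb a x"
  shows "\<forall>x\<in>D. I_rep D k r n xb a kstar \<le> I_new D k r n xb a x"
proof
  fix x assume x: "x \<in> D"
  define T where "T = mtrace (Bmat k r n xb a kstar * Wmat D k n xb)"
  define s where "s = sigma_check k r n xb a x + r x"
  define Q where "Q = kvec k n xb x \<bullet> (minv (Kmat k r n xb a) * Wmat D k n xb * minv (Kmat k r n xb a) *\<^sub>v kvec k n xb x)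
    - 2 * (wvec D k n xb x \<bullet> (minv (Kmat k r n xb a) *\<^sub>v kvec k n xb x)) + wfun D k x x"
  have sym: "transpose_mat (Kmat k r n xb a) = Kmat k r n xb a"
    using k_pd xb_D by (intro Kmat_symmetric) (auto simp: pd_kernel_def)
  have T: "0 < T" and s: "0 < s" using trBW_pos sigma_pos x by (auto simp: T_def s_def)
  have "I_rep D k r n xb a kstar = Eint D k - mtrace (minv (Kmat k r n xb a) * Wmat D k n xb) - T"
    unfolding T_def using K_inv kstar_lt a_pos r_sites den_nz by (intro I_rep_eq) auto
  moreover have "I_new D k r n xb a x = Eint D k - mtrace (minv (Kmat k r n xb a) * Wmat D k n xb) - Q / s"
    using I_new_eq[OF K_inv sym, of x] s by (simp add: Q_def s_def)
  moreover have "Q / s \<le> T"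
  proof -
    have "Q / T \<le> s" using r_cond x by (auto simp: Q_def T_def s_def)
    then show ?thesis using T s by (simp add: pos_divide_le_eq mult.commute)
  qed
  ultimately show "I_rep D k r n xb a kstar \<le> I_new D k r n xb a x" by simp
qed

end
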